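(* Let $(X,d)$ be a sequentially right $K$-complete quasi-metric space and $\varphi:X\to\mathbb{R}\cup\{\infty\}$ a proper, bounded below, nearly lower semicontinuous function. For $x\in X$ let $S(x)=\{y\in X:\varphi(y)+d(y,x)\le\varphi(x)\}$. Suppose that for every $x\in X$ with $\varphi(x)>\inf\varphi(X)$ there exists $y\in S(x)$ with $\varphi(y)<\varphi(x)$. Then there exists $z\in X$ with $\varphi(z)=\inf\varphi(X)$.
   Context: A quasi-metric on $X$ is $d:X\times X\to[0,\infty)$ with $d(x,x)=0$, $d(x,z)\le d(x,y)+d(y,z)$, and $d(x,y)=d(y,x)=0\Rightarrow x=y$ (no symmetry). Topology $\tau_d$: neighbourhood base at $x$ given by $\{y:d(x,y)<r\}$, $r>0$; $x_n\to x$ iff $d(x,x_n)\to0$. A sequence $(x_n)$ is right $K$-Cauchy if for every $\varepsilon>0$ there is $n_\varepsilon$ with $d(x_{n+k},x_n)<\varepsilon$ for all $n\ge n_\varepsilon$, $k\in\mathbb{N}$; $X$ is sequentially right $K$-complete if every right $K$-Cauchy sequence converges. $\varphi$ is proper if finite somewhere; nearly lower semicontinuous if $\varphi(x)\le\liminf_n\varphi(x_n)$ for every sequence with pairwise distinct terms converging to $x$. *)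

theory Defs
  imports "HOL-Analysis.Analysis"
begin

definition quasi_metric :: "('a \<Rightarrow> 'a \<Rightarrow> real) \<Rightarrow> bool" where
  "quasi_metric d \<longleftrightarrow>
     (\<forall>x y. d x y \<ge> 0) \<and> (\<forall>x. d x x = 0) \<and>
     (\<forall>x y z. d x z \<le> d x y + d y z) \<and>
     (\<forall>x y. d x y = 0 \<and> d y x = 0 \<longrightarrow> x = y)"

definition qconv :: "('a \<Rightarrow> 'a \<Rightarrow> real) \<Rightarrow> (nat \<Rightarrow> 'a) \<Rightarrow> 'a \<Rightarrow> bool" where
  "qconv d s x \<longleftrightarrow> (\<lambda>n. d x (s n)) \<longlonglongrightarrow> 0"

definition right_K_Cauchy :: "('a \<Rightarrow> 'a \<Rightarrow> real) \<Rightarrow> (nat \<Rightarrow> 'a) \<Rightarrow> bool" where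
  "right_K_Cauchy d s \<longleftrightarrow>
     (\<forall>\<epsilon>>0. \<exists>N. \<forall>n\<ge>N. \<forall>k::nat. d (s (n + k)) (s n) < \<epsilon>)"

definition seq_right_K_complete :: "('a \<Rightarrow> 'a \<Rightarrow> real) \<Rightarrow> bool" where
  "seq_right_K_complete d \<longleftrightarrow> (\<forall>s. right_K_Cauchy d s \<longrightarrow> (\<exists>x. qconv d s x))"

definition nearly_lsc :: "('a \<Rightarrow> 'a \<Rightarrow> real) \<Rightarrow> ('a \<Rightarrow> ereal) \<Rightarrow> bool" where
  "nearly_lsc d \<phi> \<longleftrightarrow>
     (\<forall>s x. inj s \<and> qconv d s x \<longrightarrow> \<phi> x \<le> liminf (\<lambda>n. \<phi> (s n)))"

definition proper_fun :: "('a \<Rightarrow> ereal) \<Rightarrow> bool" where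
  "proper_fun \<phi> \<longleftrightarrow> (\<exists>x. \<phi> x \<noteq> \<infinity>)"

end

theory Submission
  imports Defs
begin

text \<open>
  Suppose no point attains \<open>inf \<phi>\<close>, so every \<open>x\<close> has some
  \<open>y \<in> S(x) = descent_set d \<phi> x\<close> with \<open>\<phi> y < \<phi> x\<close>.
  Choose, Ekeland-style, \<open>x\<^sub>n\<^sub>+\<^sub>1 \<in> S(x\<^sub>n)\<close> with \<open>\<phi>(x\<^sub>n\<^sub>+\<^sub>1)\<close> within \<open>1/(n+1)\<close> of \<open>inf \<phi>(S(x\<^sub>n))\<close>.
  The sets \<open>S(x)\<close> are transitive by the triangle inequality, so \<open>x\<^sub>n\<^sub>+\<^sub>k \<in> S(x\<^sub>n)\<close>; since
  \<open>\<phi>(x\<^sub>n)\<close> decreases to some \<open>L\<close>, this makes \<open>(x\<^sub>n)\<close> right \<open>K\<close>-Cauchy with a limit \<open>x\<^sup>*\<close>.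
  The \<open>x\<^sub>n\<close> are pairwise distinct, so near lower semicontinuity gives \<open>\<phi>(x\<^sup>*) \<le> L\<close>, and then
  \<open>x\<^sup>* \<in> S(x\<^sub>n)\<close> for all \<open>n\<close>. A strict descent \<open>y \<in> S(x\<^sup>*)\<close> lies in every \<open>S(x\<^sub>n)\<close>, whence
  \<open>\<phi>(x\<^sub>n\<^sub>+\<^sub>1) < \<phi>(y) + 1/(n+1)\<close> and \<open>L \<le> \<phi>(y) < \<phi>(x\<^sup>*) \<le> L\<close>.
\<close>

definition descent_set :: "('a \<Rightarrow> 'a \<Rightarrow> real) \<Rightarrow> ('a \<Rightarrow> ereal) \<Rightarrow> 'a \<Rightarrow> 'a set" where
  "descent_set d \<phi> x = {y. \<phi> y + ereal (d y x) \<le> \<phi> x}"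

lemma quasi_metric_nonneg: "quasi_metric d \<Longrightarrow> 0 \<le> d x y"
  and quasi_metric_refl: "quasi_metric d \<Longrightarrow> d x x = 0"
  and quasi_metric_triangle: "quasi_metric d \<Longrightarrow> d x z \<le> d x y + d y z"
  unfolding quasi_metric_def by blast+

lemma descent_set_refl: "quasi_metric d \<Longrightarrow> x \<in> descent_set d \<phi> x"
  by (simp add: descent_set_def quasi_metric_refl)

lemma descent_set_trans:
  assumes "quasi_metric d" "z \<in> descent_set d \<phi> x" "y \<in> descent_set d \<phi> z"
  shows "y \<in> descent_set d \<phi> x"
proof -
  have "\<phi> y + ereal (d y x) \<le> \<phi> y + ereal (d y z) + ereal (d z x)"
    using quasi_metric_triangle[OF assms(1), of y x z]
    by (simp add: add.assoc add_left_mono)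
  also have "\<dots> \<le> \<phi> z + ereal (d z x)"
    using assms(3) by (simp add: descent_set_def add_right_mono)
  also have "\<dots> \<le> \<phi> x"
    using assms(2) by (simp add: descent_set_def)
  finally show ?thesis by (simp add: descent_set_def)
qed

lemma inj_if_strictly_descending:
  fixes f :: "'a \<Rightarrow> 'b::linorder"
  assumes "\<And>n. f (s (Suc n)) < f (s n)"
  shows "inj s"
proof (rule injI)
  have less: "f (s n) < f (s m)" if "m < n" for m n
    using that by (induction n) (auto intro: less_trans assms simp: less_Suc_eq)
  fix m n assume "s m = s n"
  then show "m = n" using less[of m n] less[of n m] by (cases m n rule: linorder_cases) auto
qed

lemma decseq_if_dominated:
  assumes "quasi_metric d" "\<And>n k. r (n + k) + d (s (n + k)) (s n) \<le> r n"
  shows "decseq r"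
  using assms(2)[of _ 1] quasi_metric_nonneg[OF assms(1)]
  by (intro decseq_SucI) (smt (verit) Suc_eq_plus1)

lemma right_K_Cauchy_if_dominated:
  assumes "quasi_metric d" "\<And>n k. r (n + k) + d (s (n + k)) (s n) \<le> r n" "r \<longlonglongrightarrow> L"
  shows "right_K_Cauchy d s"
  unfolding right_K_Cauchy_def
proof (intro allI impI)
  fix e :: real assume "e > 0"
  have L: "L \<le> r n" for n using decseq_if_dominated[OF assms(1,2)] assms(3) by (rule decseq_ge)
  obtain N where N: "\<And>n. n \<ge> N \<Longrightarrow> dist (r n) L < e"
    using assms(3) \<open>e > 0\<close> unfolding LIMSEQ_def by blast
  have "d (s (n + k)) (s n) < e" if "n \<ge> N" for n k
    using N[OF that] L[of n] L[of "n + k"] assms(2)[of n k] by (simp add: dist_real_def)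
  then show "\<exists>N. \<forall>n\<ge>N. \<forall>k. d (s (n + k)) (s n) < e" by blast
qed

lemma limit_dist_le_if_dominated:
  assumes "quasi_metric d" "\<And>n k. r (n + k) + d (s (n + k)) (s n) \<le> r n" "r \<longlonglongrightarrow> L"
    and "qconv d s x"
  shows "d x (s n) \<le> r n - L"
proof -
  have "(\<lambda>k. d x (s (n + k)) + (r n - r (n + k))) \<longlonglongrightarrow> 0 + (r n - L)"
  proof (intro tendsto_intros)
    show "(\<lambda>k. d x (s (n + k))) \<longlonglongrightarrow> 0"
      using LIMSEQ_ignore_initial_segment[OF assms(4)[unfolded qconv_def], of n]
      by (simp add: add.commute)
    show "(\<lambda>k. r (n + k)) \<longlonglongrightarrow> L"
      using LIMSEQ_ignore_initial_segment[OF assms(3), of n] by (simp add: add.commute)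
  qed
  moreover have "d x (s n) \<le> d x (s (n + k)) + (r n - r (n + k))" for k
    using quasi_metric_triangle[OF assms(1), of x "s n" "s (n + k)"] assms(2)[of n k] by simp
  ultimately show ?thesis using LIMSEQ_le_const by fastforce
qed

lemma nearly_lsc_limit_le:
  assumes "nearly_lsc d \<phi>" "inj s" "qconv d s x" "(\<lambda>n. \<phi> (s n)) \<longlonglongrightarrow> l"
  shows "\<phi> x \<le> l"
  using assms unfolding nearly_lsc_def by (metis lim_imp_Liminf trivial_limit_sequentially)

lemma exists_below_INF_plus:
  fixes f :: "'b \<Rightarrow> ereal"
  assumes "y0 \<in> A" "f y0 < a" "\<And>y. y \<in> A \<Longrightarrow> ereal c \<le> f y" "e > 0"
  shows "\<exists>y\<in>A. f y < a \<and> f y < (INF z\<in>A. f z) + ereal e"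
proof -
  define I where "I = (INF z\<in>A. f z)"
  have "ereal c \<le> I" "I \<le> f y0"
    unfolding I_def using assms(1,3) by (auto intro: INF_greatest INF_lower)
  with assms(2) obtain i where "I = ereal i" by (cases I) auto
  with assms(2,4) \<open>I \<le> f y0\<close> have "I < min a (I + ereal e)" by auto
  then show ?thesis unfolding I_def INF_less_iff by auto
qed

lemma descent_sequence_exists:
  assumes "\<And>x. \<exists>y\<in>descent_set d \<phi> x. \<phi> y < \<phi> x" "\<And>x. ereal c \<le> \<phi> x"
  obtains s where "s 0 = x0"
    and "\<And>n. s (Suc n) \<in> descent_set d \<phi> (s n)" "\<And>n. \<phi> (s (Suc n)) < \<phi> (s n)"
    and "\<And>n. \<phi> (s (Suc n)) < (INF z\<in>descent_set d \<phi> (s n). \<phi> z) + ereal (1 / real (Suc n))"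
proof -
  have "\<exists>y\<in>descent_set d \<phi> x. \<phi> y < \<phi> x \<and>
          \<phi> y < (INF z\<in>descent_set d \<phi> x. \<phi> z) + ereal (1 / real (Suc n))" for x n
    using assms(1)[of x] by (auto intro: exists_below_INF_plus assms(2))
  then have "\<exists>s. \<forall>n. (n = 0 \<longrightarrow> s n = x0) \<and> s (Suc n) \<in> descent_set d \<phi> (s n) \<and>
      \<phi> (s (Suc n)) < \<phi> (s n) \<and>
      \<phi> (s (Suc n)) < (INF z\<in>descent_set d \<phi> (s n). \<phi> z) + ereal (1 / real (Suc n))"
    by (intro dependent_nat_choice) auto
  then show ?thesis using that by blast
qed

lemma descent_sequence_limit:
  assumes "quasi_metric d" "seq_right_K_complete d" "nearly_lsc d \<phi>"
    and "\<forall>x. \<phi> x \<noteq> - \<infinity>" "\<And>x. ereal c \<le> \<phi> x" "\<phi> (s 0) < \<infinity>"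
    and step: "\<And>n. s (Suc n) \<in> descent_set d \<phi> (s n)"
    and decr: "\<And>n. \<phi> (s (Suc n)) < \<phi> (s n)"
  obtains x L where "(\<lambda>n. \<phi> (s n)) \<longlonglongrightarrow> ereal L" "\<phi> x \<le> ereal L"
    and "\<And>n. x \<in> descent_set d \<phi> (s n)"
proof -
  have "\<phi> (s n) < \<infinity>" for n
  proof (induction n)
    case (Suc n) then show ?case using decr[of n] by order
  qed (use assms(6) in simp)
  define r where "r n = real_of_ereal (\<phi> (s n))" for n
  have r: "\<phi> (s n) = ereal (r n)" for n
    unfolding r_def using assms(4) \<open>\<phi> (s n) < \<infinity>\<close> by (metis less_irrefl real_of_ereal.elims)
  have "s (n + k) \<in> descent_set d \<phi> (s n)" for n k
    by (induction k) (auto intro: descent_set_refl descent_set_trans[OF assms(1)] step assms(1))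
  then have dom: "r (n + k) + d (s (n + k)) (s n) \<le> r n" for n k
    by (simp add: descent_set_def r)
  have "r n \<ge> c" for n using assms(5)[of "s n"] by (simp add: r)
  then obtain L where L: "r \<longlonglongrightarrow> L"
    using decseq_if_dominated[OF assms(1) dom] decseq_convergent by metis
  obtain x where x: "qconv d s x"
    using assms(2) right_K_Cauchy_if_dominated[OF assms(1) dom L]
    unfolding seq_right_K_complete_def by blast
  have lim: "(\<lambda>n. \<phi> (s n)) \<longlonglongrightarrow> ereal L" using L by (simp add: r)
  then have x_le: "\<phi> x \<le> ereal L"
    using nearly_lsc_limit_le[OF assms(3) inj_if_strictly_descending[of \<phi> s, OF decr] x] by blast
  have "x \<in> descent_set d \<phi> (s n)" for n
  proof -
    have "\<phi> x + ereal (d x (s n)) \<le> ereal (L + (r n - L))"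
      using x_le limit_dist_le_if_dominated[OF assms(1) dom L x, of n]
      by (metis add_mono ereal_less_eq(3) plus_ereal.simps(1))
    then show ?thesis by (simp add: descent_set_def r)
  qed
  then show ?thesis using that lim x_le by blast
qed

lemma no_strict_descent_everywhere:
  assumes "quasi_metric d" "seq_right_K_complete d" "\<forall>x. \<phi> x \<noteq> - \<infinity>" "proper_fun \<phi>"
    and "\<exists>c::real. \<forall>x. ereal c \<le> \<phi> x" "nearly_lsc d \<phi>"
    and descent: "\<And>x. \<exists>y\<in>descent_set d \<phi> x. \<phi> y < \<phi> x"
  shows False
proof -
  obtain c :: real where c: "\<And>x. ereal c \<le> \<phi> x" using assms(5) by blast
  obtain x0 where x0: "\<phi> x0 < \<infinity>" using assms(4) unfolding proper_fun_def by (auto simp: less_top)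
  obtain s where "s 0 = x0" and step: "\<And>n. s (Suc n) \<in> descent_set d \<phi> (s n)"
    and decr: "\<And>n. \<phi> (s (Suc n)) < \<phi> (s n)"
    and near_inf: "\<And>n. \<phi> (s (Suc n)) < (INF z\<in>descent_set d \<phi> (s n). \<phi> z) + ereal (1 / real (Suc n))"
    using descent_sequence_exists[OF descent c] by blast
  obtain x L where lim: "(\<lambda>n. \<phi> (s n)) \<longlonglongrightarrow> ereal L" and x_le: "\<phi> x \<le> ereal L"
    and x_in: "\<And>n. x \<in> descent_set d \<phi> (s n)"
    using descent_sequence_limit[of d \<phi> c s, OF assms(1,2,6,3) c _ step decr] \<open>s 0 = x0\<close> x0
    by blast
  obtain y where "y \<in> descent_set d \<phi> x" and y_less: "\<phi> y < \<phi> x"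
    using descent by blast
  then have y_in: "y \<in> descent_set d \<phi> (s n)" for n
    using descent_set_trans[OF assms(1) x_in] by blast
  obtain q where q: "\<phi> y = ereal q"
    using y_less x_le assms(3) by (cases "\<phi> y") auto
  have bound: "\<phi> (s (Suc n)) \<le> ereal (q + 1 / real (Suc n))" for n
  proof -
    have "\<phi> (s (Suc n)) < \<phi> y + ereal (1 / real (Suc n))"
      using near_inf[of n] INF_lower[OF y_in[of n], of \<phi>] by (meson add_right_mono less_le_trans)
    then show ?thesis using q by simp
  qed
  have "(\<lambda>n. ereal (q + 1 / real (Suc n))) \<longlonglongrightarrow> ereal (q + 0)"
    by (intro tendsto_intros lim_const_over_n LIMSEQ_Suc)
  then have "ereal L \<le> ereal (q + 0)"
    using LIMSEQ_le[OF LIMSEQ_Suc[OF lim]] bound by blast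
  then have "ereal L \<le> \<phi> y" using q by simp
  then show False using y_less x_le by simp
qed

theorem theorem3p5:
  fixes d :: "'a \<Rightarrow> 'a \<Rightarrow> real" and \<phi> :: "'a \<Rightarrow> ereal"
  assumes "quasi_metric d"
    and "seq_right_K_complete d"
    and "\<forall>x. \<phi> x \<noteq> - \<infinity>"
    and "proper_fun \<phi>"
    and "\<exists>c::real. \<forall>x. ereal c \<le> \<phi> x"
    and "nearly_lsc d \<phi>"
    and "\<forall>x. \<phi> x > (INF u. \<phi> u) \<longrightarrow>
           (\<exists>y. \<phi> y + ereal (d y x) \<le> \<phi> x \<and> \<phi> y < \<phi> x)"
  shows "\<exists>z. \<phi> z = (INF u. \<phi> u)"
proof (rule ccontr)
  assume no_min: "\<nexists>z. \<phi> z = (INF u. \<phi> u)"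
  have "\<exists>y\<in>descent_set d \<phi> x. \<phi> y < \<phi> x" for x
  proof -
    have "(INF u. \<phi> u) < \<phi> x"
      using no_min INF_lower[of x UNIV \<phi>] by (metis UNIV_I order_le_less)
    then show ?thesis using assms(7) by (auto simp: descent_set_def)
  qed
  then show False using no_strict_descent_everywhere[OF assms(1-6)] by blast
qed

end
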